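(* Let $\mathbf{A}\in\mathbb{R}^{(\ell n)\times(qn)}$ be a block matrix with $\ell\times q$ blocks of size $n\times n$, with distinct nonzero blocks $\mathbf{A}_1,\dots,\mathbf{A}_p$. Suppose each $\mathbf{A}_k$ has upper bandwidth $u_k$ and lower bandwidth $\ell_k$, and set $b_u=\max_k u_k$, $b_\ell=\max_k \ell_k$. Let $r_2$ be the second entry of the multilinear rank of the tensor associated with $\mathbf{A}$. Then $$r_2\le n+\sum_{i=1}^{b_u}(n-i)+\sum_{j=1}^{b_\ell}(n-j).$$
   Context: Blocks: $\mathbf{A}^{(\gamma,\delta)}_{\alpha\beta}=\mathbf{A}_{(\gamma-1)n+\alpha,(\delta-1)n+\beta}$; $\eta_k$ is the number of block positions at which $\mathbf{A}_k$ occurs. A matrix $\mathbf{M}\in\mathbb{R}^{n\times n}$ has upper bandwidth $u$ and lower bandwidth $l$ if $u,l$ are the smallest nonnegative integers such that $\mathbf{M}_{ij}=0$ whenever $j-i>u$ or $i-j>l$. The associated tensor $\mathcal{A}\in\mathbb{R}^{n\times p\times n}$ has entries $\mathcal{A}_{ikj}=\sqrt{\eta_k}[\mathbf{A}_k]_{ij}$, and $r_2=\mathrm{rank}(\mathbf{A}_{(2)})$ where $\mathbf{A}_{(2)}\in\mathbb{R}^{p\times n^2}$ has $k$th row $\mathrm{vec}(\sqrt{\eta_k}\mathbf{A}_k)^\top$. *)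

theory Defs
  imports "Jordan_Normal_Form.DL_Rank"
begin

definition block :: "nat \<Rightarrow> real mat \<Rightarrow> nat \<Rightarrow> nat \<Rightarrow> real mat" where
  "block n A g d = mat n n (\<lambda>(a,b). A $$ (g*n + a, d*n + b))"

definition upper_bandwidth :: "real mat \<Rightarrow> nat" where
  "upper_bandwidth M = (LEAST u. \<forall>i<dim_row M. \<forall>j<dim_col M. j > i + u \<longrightarrow> M $$ (i,j) = 0)"

definition lower_bandwidth :: "real mat \<Rightarrow> nat" where
  "lower_bandwidth M = (LEAST l. \<forall>i<dim_row M. \<forall>j<dim_col M. i > j + l \<longrightarrow> M $$ (i,j) = 0)"

definition eta :: "nat \<Rightarrow> nat \<Rightarrow> nat \<Rightarrow> real mat \<Rightarrow> real mat \<Rightarrow> nat" where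
  "eta n l q A B = card {(g,d). g < l \<and> d < q \<and> block n A g d = B}"

text \<open>Mode-2 unfolding A_(2) (p x n^2): k-th row is vec(sqrt(eta_k) A_k), column-major vec.\<close>
definition unfold2 :: "nat \<Rightarrow> nat \<Rightarrow> nat \<Rightarrow> real mat \<Rightarrow> real mat list \<Rightarrow> real mat" where
  "unfold2 n l q A As = mat (length As) (n*n)
     (\<lambda>(k,c). sqrt (real (eta n l q A (As ! k))) * (As ! k) $$ (c mod n, c div n))"

end

theory Submission
  imports Defs
begin

text \<open>
  The columns of the mode-2 unfolding are indexed by the positions \<open>(i, j)\<close> of an
  \<open>n \<times> n\<close> block, the column at \<open>(i, j)\<close> collecting the \<open>(i, j)\<close> entries of all the
  distinct blocks. If every block has upper bandwidth at most \<open>b\<^sub>u\<close> and lower bandwidth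
  at most \<open>b\<^sub>l\<close>, every column indexed by a position outside the common band vanishes, so
  \<open>r\<^sub>2\<close> is at most the number of band positions: \<open>n\<close> on the diagonal and \<open>n - d\<close> on each
  of the \<open>b\<^sub>u\<close> superdiagonals and \<open>b\<^sub>l\<close> subdiagonals at distance \<open>d\<close>.
\<close>

lemma (in vec_space) rank_le_card_nonzero_cols:
  assumes M: "M \<in> carrier_mat n nc" and "finite J"
    and zero_col: "\<And>c. c < nc \<Longrightarrow> c \<notin> J \<Longrightarrow> col M c = 0\<^sub>v n"
  shows "rank M \<le> card J"
proof -
  obtain S where S: "maximal S (\<lambda>T. T \<subseteq> set (cols M) \<and> lin_indpt T)"
    using maximal_exists[of "\<lambda>T. T \<subseteq> set (cols M) \<and> lin_indpt T" "card (set (cols M))" "{}"]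
    by (meson List.finite_set card_mono empty_iff empty_subsetI finite_lin_indpt2 rev_finite_subset)
  have S_cols: "S \<subseteq> set (cols M)" and "lin_indpt S"
    using S by (auto simp: maximal_def)
  have "S \<subseteq> carrier_vec n"
    using S_cols cols_dim M by blast
  moreover have "carrier class_ring \<noteq> {\<zero>\<^bsub>class_ring :: 'a ring\<^esub>}"
    by (auto simp: class_ring_simps set_eq_iff intro: exI[of _ 1])
  ultimately have "0\<^sub>v n \<notin> S"
    using zero_nin_lin_indpt \<open>lin_indpt S\<close> by simp
  have "S \<subseteq> col M ` J"
  proof
    fix v assume "v \<in> S"
    moreover have "set (cols M) = col M ` {..<nc}"
      using M by (simp add: cols_def lessThan_atLeast0)
    ultimately obtain c where "c < nc" "v = col M c"
      using S_cols by blast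
    with \<open>v \<in> S\<close> \<open>0\<^sub>v n \<notin> S\<close> have "col M c \<noteq> 0\<^sub>v n"
      by auto
    with zero_col \<open>c < nc\<close> have "c \<in> J"
      by blast
    with \<open>v = col M c\<close> show "v \<in> col M ` J"
      by blast
  qed
  then have "card S \<le> card J"
    using \<open>finite J\<close> by (meson card_image_le card_mono finite_imageI le_trans)
  then show ?thesis
    using rank_card_indpt[OF M S] by simp
qed

definition band :: "nat \<Rightarrow> nat \<Rightarrow> nat \<Rightarrow> (nat \<times> nat) set" where
  "band n u l = {(i, j). i < n \<and> j < n \<and> j \<le> i + u \<and> i \<le> j + l}"

lemma finite_band: "finite (band n u l)"
  by (rule finite_subset[of _ "{..<n} \<times> {..<n}"]) (auto simp: band_def)

lemma card_band_swap: "card (band n l u) = card (band n u l)"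
proof -
  have "band n l u = prod.swap ` band n u l"
    by (auto simp: band_def)
  then show ?thesis
    by (simp add: card_image)
qed

lemma card_band_diagonal: "card (band n 0 0) = n"
proof -
  have "band n 0 0 = (\<lambda>i. (i, i)) ` {..<n}"
    by (auto simp: band_def)
  then show ?thesis
    by (simp add: card_image inj_on_def)
qed

lemma card_band_Suc_upper: "card (band n (Suc u) l) \<le> card (band n u l) + (n - Suc u)"
proof -
  let ?diagonal = "(\<lambda>i. (i, i + Suc u)) ` {..<n - Suc u}"
  have "band n (Suc u) l \<subseteq> band n u l \<union> ?diagonal"
  proof
    fix p assume "p \<in> band n (Suc u) l"
    then obtain i j where p: "p = (i, j)" "i < n" "j < n" "j \<le> i + Suc u" "i \<le> j + l"
      by (auto simp: band_def)
    show "p \<in> band n u l \<union> ?diagonal"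
    proof (cases "j = i + Suc u")
      case True
      with p show ?thesis by auto
    next
      case False
      with p show ?thesis by (simp add: band_def)
    qed
  qed
  then have "card (band n (Suc u) l) \<le> card (band n u l \<union> ?diagonal)"
    by (intro card_mono) (simp_all add: finite_band)
  also have "\<dots> \<le> card (band n u l) + card ?diagonal"
    by (rule card_Un_le)
  also have "card ?diagonal \<le> n - Suc u"
    using card_image_le[of "{..<n - Suc u}"] by simp
  finally show ?thesis by simp
qed

lemma card_band_Suc_lower: "card (band n u (Suc l)) \<le> card (band n u l) + (n - Suc l)"
  using card_band_Suc_upper[of n l u] by (simp add: card_band_swap)

lemma card_band_le: "card (band n u l) \<le> n + (\<Sum>i=1..u. n - i) + (\<Sum>j=1..l. n - j)"
proof (induction u)
  case 0
  show ?case
  proof (induction l)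
    case 0
    then show ?case by (simp add: card_band_diagonal)
  next
    case (Suc l)
    then show ?case using card_band_Suc_lower[of n 0 l] by simp
  qed
next
  case (Suc u)
  then show ?case using card_band_Suc_upper[of n u l] by simp
qed

lemma upper_bandwidth_zero:
  assumes "upper_bandwidth M \<le> u" "i < dim_row M" "j < dim_col M" "i + u < j"
  shows "M $$ (i, j) = 0"
proof -
  let ?vanishes = "\<lambda>u. \<forall>i<dim_row M. \<forall>j<dim_col M. j > i + u \<longrightarrow> M $$ (i, j) = 0"
  have "?vanishes (dim_col M)" by auto
  then have "?vanishes (upper_bandwidth M)"
    unfolding upper_bandwidth_def by (rule LeastI)
  with assms show ?thesis by auto
qed

lemma lower_bandwidth_zero:
  assumes "lower_bandwidth M \<le> l" "i < dim_row M" "j < dim_col M" "j + l < i"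
  shows "M $$ (i, j) = 0"
proof -
  let ?vanishes = "\<lambda>l. \<forall>i<dim_row M. \<forall>j<dim_col M. i > j + l \<longrightarrow> M $$ (i, j) = 0"
  have "?vanishes (dim_row M)" by auto
  then have "?vanishes (lower_bandwidth M)"
    unfolding lower_bandwidth_def by (rule LeastI)
  with assms show ?thesis by auto
qed

lemma entry_outside_band_zero:
  assumes "M \<in> carrier_mat n n" "upper_bandwidth M \<le> u" "lower_bandwidth M \<le> l"
    and "i < n" "j < n" "(i, j) \<notin> band n u l"
  shows "M $$ (i, j) = 0"
proof -
  have "i + u < j \<or> j + l < i"
    using assms(4-6) by (auto simp: band_def)
  then show ?thesis
    using assms upper_bandwidth_zero[of M u i j] lower_bandwidth_zero[of M l i j] by auto
qed

lemma col_unfold2: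
  assumes "c < n * n"
  shows "col (unfold2 n l q A As) c
    = vec (length As) (\<lambda>k. sqrt (real (eta n l q A (As ! k))) * (As ! k) $$ (c mod n, c div n))"
  using assms by (auto simp: unfold2_def)

lemma rank_unfold2_le_card_support:
  assumes "finite P"
    and zero_outside: "\<And>B i j. B \<in> set As \<Longrightarrow> i < n \<Longrightarrow> j < n \<Longrightarrow> (i, j) \<notin> P \<Longrightarrow> B $$ (i, j) = 0"
  shows "vec_space.rank (length As) (unfold2 n l q A As) \<le> card P"
proof -
  let ?pos = "\<lambda>c. (c mod n, c div n)"
  define J where "J = {c. c < n * n \<and> ?pos c \<in> P}"
  have "unfold2 n l q A As \<in> carrier_mat (length As) (n * n)"
    by (simp add: unfold2_def)
  moreover have "finite J"
    by (simp add: J_def)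
  moreover have "col (unfold2 n l q A As) c = 0\<^sub>v (length As)" if "c < n * n" "c \<notin> J" for c
  proof -
    have "0 < n"
      using \<open>c < n * n\<close> by (cases n) auto
    then have "c mod n < n" "c div n < n"
      using \<open>c < n * n\<close> by (simp_all add: less_mult_imp_div_less)
    with that zero_outside show ?thesis
      by (auto simp: col_unfold2 J_def)
  qed
  ultimately have "vec_space.rank (length As) (unfold2 n l q A As) \<le> card J"
    by (rule vec_space.rank_le_card_nonzero_cols)
  also have "card J \<le> card P"
  proof (rule card_inj_on_le)
    show "inj_on ?pos J"
      by (intro inj_onI) (metis div_mult_mod_eq prod.inject)
  qed (use \<open>finite P\<close> in \<open>auto simp: J_def\<close>)
  finally show ?thesis .
qed

theorem corollary2:
  fixes n l q :: nat and A :: "real mat" and As :: "real mat list"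
  assumes "A \<in> carrier_mat (l*n) (q*n)"
    and "distinct As"
    and "set As = {B. \<exists>g<l. \<exists>d<q. B = block n A g d \<and> B \<noteq> 0\<^sub>m n n}"
  shows "vec_space.rank (length As) (unfold2 n l q A As)
     \<le> n + (\<Sum>i=1..Max (upper_bandwidth ` set As). n - i)
         + (\<Sum>j=1..Max (lower_bandwidth ` set As). n - j)"
proof -
  define bu where "bu = Max (upper_bandwidth ` set As)"
  define bl where "bl = Max (lower_bandwidth ` set As)"
  have "B $$ (i, j) = 0"
    if "B \<in> set As" "i < n" "j < n" "(i, j) \<notin> band n bu bl" for B i j
  proof (rule entry_outside_band_zero)
    show "B \<in> carrier_mat n n"
      using \<open>B \<in> set As\<close> assms(3) by (auto simp: block_def)
    show "upper_bandwidth B \<le> bu" "lower_bandwidth B \<le> bl"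
      using \<open>B \<in> set As\<close> by (auto simp: bu_def bl_def)
  qed (use that in auto)
  then have "vec_space.rank (length As) (unfold2 n l q A As) \<le> card (band n bu bl)"
    by (intro rank_unfold2_le_card_support finite_band)
  also have "\<dots> \<le> n + (\<Sum>i=1..bu. n - i) + (\<Sum>j=1..bl. n - j)"
    by (rule card_band_le)
  finally show ?thesis
    unfolding bu_def bl_def .
qed

end
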